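(* Let $r\in\mathbb Z_+$ be even, $\Gamma=\Gamma_{(r,r)}$, and $E\in\mathcal C_\Gamma\setminus\{-4,0,4\}$ with $E<0$. Let $\ell\ge1$ be maximal with $\lambda_\ell^\Gamma(0,0)<E$, and let $m\ge0$ be maximal with $\lambda_m^\Gamma(\pi,\pi)<E$ (with the convention $\lambda_0^\Gamma(\pi,\pi)=-\infty$). Then there exist $(\theta_1,\varphi_1),(\theta_2,\varphi_2)\in[0,\pi]^2$ and integers $n_1,n_2\ge0$ such that $\lambda^\Gamma_{\ell+2n_1}(\theta_1,\varphi_1)<E<\lambda^\Gamma_{\ell+2n_1+1}(\theta_1,\varphi_1)$ and $\lambda^\Gamma_{m+2n_2}(\theta_2,\varphi_2)<E<\lambda^\Gamma_{m+2n_2+1}(\theta_2,\varphi_2)$.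
   Context: For $r\ge3$ and $\theta\in\mathbb R$, $\Delta_\theta^r\in\mathbb C^{r\times r}$ is the Hermitian matrix with $1$ on the sub- and superdiagonals, $0$ on the diagonal, entry $e^{-i\theta}$ in position $(1,r)$ and $e^{i\theta}$ in position $(r,1)$, all other entries $0$; $\Delta_\theta^2=\begin{bmatrix}0&1+e^{-i\theta}\\1+e^{i\theta}&0\end{bmatrix}$. $\Gamma=\Gamma_{(r,r)}$, $\Delta^\Gamma_{\theta,\varphi}=\Delta_\theta^r\otimes I_r+I_r\otimes\Delta_\varphi^r$, with eigenvalues $\lambda_1^\Gamma(\theta,\varphi)\le\cdots\le\lambda_{r^2}^\Gamma(\theta,\varphi)$ counted with multiplicity (and $\lambda_0^\Gamma:=-\infty$). $\mathcal C_r=\{2\cos(\pi j/r): j\in\mathbb Z,\ 0\le j\le r\}$ and $\mathcal C_\Gamma=\{a+b:a,b\in\mathcal C_r\}$. *)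

theory Defs
  imports "HOL-Analysis.Analysis" "Jordan_Normal_Form.Char_Poly" "HOL-Library.Extended_Real"
begin

definition Delta :: "nat \<Rightarrow> real \<Rightarrow> complex mat" where
  "Delta r \<theta> = mat r r (\<lambda>(i,j).
     if r = 2 then
       (if i = 0 \<and> j = 1 then 1 + exp (- \<i> * of_real \<theta>)
        else if i = 1 \<and> j = 0 then 1 + exp (\<i> * of_real \<theta>) else 0)
     else
       (if i + 1 = j \<or> j + 1 = i then 1
        else if i = 0 \<and> j = r - 1 then exp (- \<i> * of_real \<theta>)
        else if i = r - 1 \<and> j = 0 then exp (\<i> * of_real \<theta>) else 0))"

definition kron :: "complex mat \<Rightarrow> complex mat \<Rightarrow> complex mat" where
  "kron A B = mat (dim_row A * dim_row B) (dim_col A * dim_col B) (\<lambda>(i,j).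
     A $$ (i div dim_row B, j div dim_col B) * B $$ (i mod dim_row B, j mod dim_col B))"

definition DeltaGamma :: "nat \<Rightarrow> real \<Rightarrow> real \<Rightarrow> complex mat" where
  "DeltaGamma r \<theta> \<phi> = kron (Delta r \<theta>) (1\<^sub>m r) + kron (1\<^sub>m r) (Delta r \<phi>)"

text \<open>Eigenvalues (counted with multiplicity, as roots of the characteristic polynomial),
  real parts (the matrix is Hermitian), sorted increasingly.\<close>
definition eigs_sorted :: "complex mat \<Rightarrow> real list" where
  "eigs_sorted A = sorted_list_of_multiset (image_mset Re (proots (char_poly A)))"

definition lamG :: "nat \<Rightarrow> nat \<Rightarrow> real \<Rightarrow> real \<Rightarrow> ereal" where
  "lamG r k \<theta> \<phi> = (if k = 0 then -\<infinity> else ereal (eigs_sorted (DeltaGamma r \<theta> \<phi>) ! (k - 1)))"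

definition C_r :: "nat \<Rightarrow> real set" where
  "C_r r = {2 * cos (pi * real j / real r) | j. j \<le> r}"

definition C_Gamma :: "nat \<Rightarrow> real set" where
  "C_Gamma r = {a + b | a b. a \<in> C_r r \<and> b \<in> C_r r}"

end

theory Submission
  imports Defs
begin

text \<open>The matrix \<open>DeltaGamma r \<theta> \<phi>\<close> is diagonalised by the discrete Fourier basis; its eigenvalues
  are \<open>2 cos ((\<theta> + 2\<pi>a)/r) + 2 cos ((\<phi> + 2\<pi>b)/r)\<close> for \<open>a, b < r\<close>, so \<open>\<lambda>\<^sub>k < E\<close> holds iff at
  least \<open>k\<close> of them lie below \<open>E\<close>.  Move off \<open>(0,0)\<close> along \<open>(t, c t)\<close>, resp. off \<open>(\<pi>,\<pi>)\<close> along
  \<open>(\<pi> - t, \<pi> - c t)\<close>, with \<open>c, t > 0\<close> small: eigenvalues different from \<open>E\<close> stay on their side, and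
  an eigenvalue equal to \<open>E\<close> drops below \<open>E\<close> iff its derivative along the line is negative, which for
  small \<open>c\<close> is decided by the sine of the first angle (of the second one where the first vanishes).
  The reflections \<open>b \<mapsto> r - b\<close> at \<open>0\<close> and \<open>b \<mapsto> r - 1 - b\<close> at \<open>\<pi>\<close>, together with exchanging \<open>a\<close>
  and \<open>b\<close> on the line \<open>a = r/2\<close>, pair off the eigenvalues that drop, so the count goes up by an even
  number while no eigenvalue equals \<open>E\<close> any more.\<close>

section \<open>Diagonalising \<open>DeltaGamma\<close>\<close>

definition cycle_angle :: "nat \<Rightarrow> real \<Rightarrow> nat \<Rightarrow> real" where
  "cycle_angle r \<theta> p = (\<theta> + 2 * pi * real p) / real r"

definition cycle_eigenvalue :: "nat \<Rightarrow> real \<Rightarrow> nat \<Rightarrow> real" where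
  "cycle_eigenvalue r \<theta> p = 2 * cos (cycle_angle r \<theta> p)"

lemma cis_real_mult_cycle_angle: "r > 0 \<Longrightarrow> cis (real r * cycle_angle r \<theta> p) = cis \<theta>"
proof -
  assume "r > 0"
  then have "cis (real r * cycle_angle r \<theta> p) = cis (\<theta> + 2 * pi * real p)"
    by (simp add: cycle_angle_def)
  also have "\<dots> = cis \<theta> * cis (2 * pi * real p)"
    by (rule cis_mult[symmetric])
  also have "cis (2 * pi * real p) = 1"
    by (rule cis_multiple_2pi) simp
  finally show ?thesis by simp
qed

lemma cis_add_cis_minus: "cis x + cis (- x) = complex_of_real (2 * cos x)"
  by (simp add: complex_eq_iff)

lemma Delta_2_index:
  "Delta 2 \<theta> $$ (0, 0) = 0" "Delta 2 \<theta> $$ (0, Suc 0) = 1 + cis (- \<theta>)"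
  "Delta 2 \<theta> $$ (Suc 0, 0) = 1 + cis \<theta>" "Delta 2 \<theta> $$ (Suc 0, Suc 0) = 0"
  by (simp_all add: Delta_def cis_conv_exp)

lemma Delta_index:
  assumes "r \<ge> 3" "i < r" "j < r"
  shows "Delta r \<theta> $$ (i, j) =
    (if i + 1 = j \<or> j + 1 = i then 1
     else if i = 0 \<and> j = r - 1 then cis (- \<theta>)
     else if i = r - 1 \<and> j = 0 then cis \<theta> else 0)"
  using assms by (simp add: Delta_def cis_conv_exp)

lemma sum_lessThan_two_points:
  fixes n :: nat
  assumes "x < n" "y < n"
  shows "(\<Sum>b<n. (if b = x then f b else 0) + (if b = y then g b else 0)) = f x + (g y :: 'a::comm_monoid_add)"
  using assms by (simp add: sum.distrib)

lemma Delta_2_eigenvector: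
  assumes a: "a < 2" and x: "cis (2 * x) = cis \<theta>"
  shows "(\<Sum>b<2. Delta 2 \<theta> $$ (a, b) * cis (real b * x)) = complex_of_real (2 * cos x) * cis (real a * x)"
proof -
  have x': "cis (- \<theta>) = cis (- 2 * x)"
    using arg_cong[OF x, of cnj] by (simp add: cis_cnj)
  have "(\<Sum>b<2. Delta 2 \<theta> $$ (a, b) * cis (real b * x)) = Delta 2 \<theta> $$ (a, 0) + Delta 2 \<theta> $$ (a, Suc 0) * cis x"
    by (simp add: numeral_2_eq_2)
  also have "\<dots> = (cis x + cis (- x)) * cis (real a * x)"
  proof (cases "a = 0")
    case True
    then show ?thesis by (simp add: Delta_2_index x' distrib_right cis_mult)
  next
    case False
    then have "a = 1" using a by simp
    then show ?thesis by (simp add: Delta_2_index x[symmetric] distrib_right distrib_left cis_mult)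
  qed
  finally show ?thesis by (simp add: cis_add_cis_minus)
qed

lemma Delta_ge_3_eigenvector:
  assumes r: "r \<ge> 3" and a: "a < r" and x: "cis (real r * x) = cis \<theta>"
  shows "(\<Sum>b<r. Delta r \<theta> $$ (a, b) * cis (real b * x)) = complex_of_real (2 * cos x) * cis (real a * x)"
proof -
  have x': "cis (- \<theta>) = cis (- (real r * x))"
    using arg_cong[OF x, of cnj] by (simp add: cis_cnj)
  have "(\<Sum>b<r. Delta r \<theta> $$ (a, b) * cis (real b * x)) = (cis x + cis (- x)) * cis (real a * x)"
  proof (cases "a = 0")
    case True
    have "(\<Sum>b<r. Delta r \<theta> $$ (a, b) * cis (real b * x)) =
        (\<Sum>b<r. (if b = 1 then cis (real b * x) else 0) + (if b = r - 1 then cis (- \<theta>) * cis (real b * x) else 0))"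
      by (rule sum.cong) (use True r in \<open>auto simp: Delta_index\<close>)
    also have "\<dots> = cis (real 1 * x) + cis (- \<theta>) * cis (real (r - 1) * x)"
      by (rule sum_lessThan_two_points) (use r in auto)
    finally show ?thesis
      using True r by (simp add: x' cis_mult algebra_simps)
  next
    case a0: False
    show ?thesis
    proof (cases "a = r - 1")
      case True
      have "(\<Sum>b<r. Delta r \<theta> $$ (a, b) * cis (real b * x)) =
          (\<Sum>b<r. (if b = r - 2 then cis (real b * x) else 0) + (if b = 0 then cis \<theta> * cis (real b * x) else 0))"
        by (rule sum.cong) (use True r in \<open>auto simp: Delta_index\<close>)
      also have "\<dots> = cis (real (r - 2) * x) + cis \<theta> * cis (real 0 * x)"
        by (rule sum_lessThan_two_points) (use r in auto)
      finally show ?thesis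
        using True r by (simp add: x[symmetric] cis_mult algebra_simps)
    next
      case False
      have "(\<Sum>b<r. Delta r \<theta> $$ (a, b) * cis (real b * x)) =
          (\<Sum>b<r. (if b = a + 1 then cis (real b * x) else 0) + (if b = a - 1 then cis (real b * x) else 0))"
        by (rule sum.cong) (use a0 False a r in \<open>auto simp: Delta_index\<close>)
      also have "\<dots> = cis (real (a + 1) * x) + cis (real (a - 1) * x)"
        by (rule sum_lessThan_two_points) (use a0 False a in auto)
      finally show ?thesis
        using a0 by (simp add: cis_mult algebra_simps)
    qed
  qed
  then show ?thesis by (simp add: cis_add_cis_minus)
qed

lemma Delta_cis_eigenvector:
  assumes "r \<ge> 2" "a < r" "cis (real r * x) = cis \<theta>"
  shows "(\<Sum>b<r. Delta r \<theta> $$ (a, b) * cis (real b * x)) = complex_of_real (2 * cos x) * cis (real a * x)"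
proof (cases "r = 2")
  case True
  then show ?thesis using assms Delta_2_eigenvector by simp
next
  case False
  then show ?thesis using assms Delta_ge_3_eigenvector by simp
qed

lemma bij_betw_div_mod:
  fixes m n :: nat
  shows "bij_betw (\<lambda>i. (i div n, i mod n)) {..<m * n} ({..<m} \<times> {..<n})"
proof (rule bij_betw_byWitness[where f' = "\<lambda>(a, b). a * n + b"])
  show "(\<lambda>(a, b). a * n + b) ` ({..<m} \<times> {..<n}) \<subseteq> {..<m * n}"
  proof clarsimp
    fix a b assume "a < m" "b < n"
    then have "a * n + b < (a + 1) * n" by simp
    also have "\<dots> \<le> m * n" using \<open>a < m\<close> by (intro mult_right_mono) auto
    finally show "a * n + b < m * n" .
  qed
  show "(\<lambda>i. (i div n, i mod n)) ` {..<m * n} \<subseteq> {..<m} \<times> {..<n}"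
    by (auto simp: less_mult_imp_div_less) (metis mod_less_divisor mult_0_right not_less_zero gr0I)
qed auto
lemma sum_div_mod:
  fixes m n :: nat
  shows "(\<Sum>i<m * n. f (i div n) (i mod n)) = (\<Sum>a<m. \<Sum>b<n. f a b)"
proof -
  have "(\<Sum>i<m * n. f (i div n) (i mod n)) = (\<Sum>(a, b)\<in>{..<m} \<times> {..<n}. f a b)"
    using sum.reindex_bij_betw[OF bij_betw_div_mod, of "\<lambda>(a, b). f a b" n m] by (simp only: prod.case)
  also have "\<dots> = (\<Sum>a<m. \<Sum>b<n. f a b)"
    by (rule sum.cartesian_product[symmetric])
  finally show ?thesis .
qed

lemma card_div_mod:
  fixes m n :: nat
  shows "card {i. i < m * n \<and> P (i div n) (i mod n)} = card {(a, b). a < m \<and> b < n \<and> P a b}"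
proof -
  have "bij_betw (\<lambda>i. (i div n, i mod n)) {i \<in> {..<m * n}. P (i div n) (i mod n)} {p \<in> {..<m} \<times> {..<n}. case_prod P p}"
    by (rule bij_betw_Collect[OF bij_betw_div_mod]) simp
  moreover have "{i \<in> {..<m * n}. P (i div n) (i mod n)} = {i. i < m * n \<and> P (i div n) (i mod n)}"
    by auto
  moreover have "{p \<in> {..<m} \<times> {..<n}. case_prod P p} = {(a, b). a < m \<and> b < n \<and> P a b}"
    by auto
  ultimately show ?thesis
    using bij_betw_same_card by fastforce
qed

lemma cis_two_pi_frac_ne_1:
  assumes "p < r" "q < r" "p \<noteq> q"
  shows "cis (2 * pi * (real q - real p) / real r) \<noteq> 1"
proof
  assume "cis (2 * pi * (real q - real p) / real r) = 1"
  then have "cos (2 * pi * (real q - real p) / real r) = 1"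
    by (metis cis.sel(1) one_complex.sel(1))
  then obtain k :: int where "2 * pi * (real q - real p) / real r = real_of_int k * 2 * pi"
    by (auto simp: cos_one_2pi_int)
  then have "pi * (real q - real p) = pi * (real_of_int k * real r)"
    using assms by (simp add: field_simps)
  then have "real q - real p = real_of_int k * real r"
    by simp
  then have k: "int q - int p = k * int r"
    by (metis of_int_eq_iff of_int_mult of_int_of_nat_eq of_int_diff)
  show False
  proof (cases "k = 0")
    case True
    then show False using k assms by simp
  next
    case False
    then have "1 \<le> \<bar>k\<bar>" by simp
    then have "int r \<le> \<bar>k * int r\<bar>"
      by (simp add: abs_mult mult_le_cancel_right1)
    moreover have "\<bar>int q - int p\<bar> < int r" using assms by auto
    ultimately show False using k by simp
  qed
qed

lemma sum_cis_cycle_angle_diff: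
  assumes "p < r" "q < r"
  shows "(\<Sum>a<r. cis (real a * (cycle_angle r \<theta> q - cycle_angle r \<theta> p))) = (if p = q then of_nat r else 0)"
proof (cases "p = q")
  case False
  define z where "z = cis (2 * pi * (real q - real p) / real r)"
  have d: "cycle_angle r \<theta> q - cycle_angle r \<theta> p = 2 * pi * (real q - real p) / real r"
    using assms by (simp add: cycle_angle_def field_simps)
  have sum_z: "(\<Sum>a<r. cis (real a * (cycle_angle r \<theta> q - cycle_angle r \<theta> p))) = (\<Sum>a<r. z ^ a)"
    by (intro sum.cong refl) (simp only: d z_def Complex.DeMoivre)
  have "real r * (2 * pi * (real q - real p) / real r) = 2 * pi * (real q - real p)"
    using assms by simp
  then have "z ^ r = cis (2 * pi * (real q - real p))"
    by (simp only: z_def Complex.DeMoivre)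
  also have "\<dots> = 1"
    by (rule cis_multiple_2pi) (intro Ints_diff Ints_of_nat)
  finally have "(\<Sum>a<r. z ^ a) = 0"
    using cis_two_pi_frac_ne_1[OF assms False] by (simp add: z_def sum_gp_strict)
  then show ?thesis using False sum_z by simp
qed simp

definition grid_eigenvalue :: "nat \<Rightarrow> real \<Rightarrow> real \<Rightarrow> nat \<Rightarrow> real" where
  "grid_eigenvalue r \<theta> \<phi> i = cycle_eigenvalue r \<theta> (i div r) + cycle_eigenvalue r \<phi> (i mod r)"

text \<open>Column \<open>a * r + b\<close> of \<open>fourier_mat\<close> is the tensor product of the cycle eigenvectors
  \<open>(cis (k * cycle_angle r \<theta> a))\<^sub>k\<close> and \<open>(cis (k * cycle_angle r \<phi> b))\<^sub>k\<close>, indexed as in \<open>kron\<close>.\<close>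
definition fourier_mat :: "nat \<Rightarrow> real \<Rightarrow> real \<Rightarrow> complex mat" where
  "fourier_mat r \<theta> \<phi> = mat (r * r) (r * r) (\<lambda>(i, j).
     cis (real (i div r) * cycle_angle r \<theta> (j div r)) * cis (real (i mod r) * cycle_angle r \<phi> (j mod r)))"

definition fourier_inv_mat :: "nat \<Rightarrow> real \<Rightarrow> real \<Rightarrow> complex mat" where
  "fourier_inv_mat r \<theta> \<phi> = mat (r * r) (r * r) (\<lambda>(i, j).
     cis (- (real (j div r) * cycle_angle r \<theta> (i div r))) *
     cis (- (real (j mod r) * cycle_angle r \<phi> (i mod r))) / of_nat (r * r))"

lemma index_mult_mat_sum:
  assumes "A \<in> carrier_mat n n" "B \<in> carrier_mat n n" "i < n" "j < n"
  shows "(A * B) $$ (i, j) = (\<Sum>l<n. A $$ (i, l) * B $$ (l, j))"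
  using assms by (simp add: scalar_prod_def atLeast0LessThan)

lemma div_mod_less_square:
  fixes i r :: nat
  assumes "i < r * r"
  shows "i div r < r" "i mod r < r"
  using assms by (simp_all add: less_mult_imp_div_less) (cases "r = 0"; simp)

lemma fourier_inv_mat_mult: "r > 0 \<Longrightarrow> fourier_inv_mat r \<theta> \<phi> * fourier_mat r \<theta> \<phi> = 1\<^sub>m (r * r)"
proof (rule eq_matI)
  fix i j assume r: "r > 0" and "i < dim_row (1\<^sub>m (r * r) :: complex mat)" "j < dim_col (1\<^sub>m (r * r) :: complex mat)"
  then have i: "i < r * r" and j: "j < r * r" by auto
  define x where "x = cycle_angle r \<theta> (j div r) - cycle_angle r \<theta> (i div r)"
  define y where "y = cycle_angle r \<phi> (j mod r) - cycle_angle r \<phi> (i mod r)"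
  have "(fourier_inv_mat r \<theta> \<phi> * fourier_mat r \<theta> \<phi>) $$ (i, j) =
      (\<Sum>l<r * r. fourier_inv_mat r \<theta> \<phi> $$ (i, l) * fourier_mat r \<theta> \<phi> $$ (l, j))"
    by (rule index_mult_mat_sum) (use i j in \<open>auto simp: fourier_inv_mat_def fourier_mat_def\<close>)
  also have "\<dots> = (\<Sum>l<r * r. cis (real (l div r) * x) * cis (real (l mod r) * y) / of_nat (r * r))"
    using i j by (intro sum.cong refl)
      (auto simp: fourier_inv_mat_def fourier_mat_def div_mod_less_square x_def y_def cis_mult algebra_simps)
  also have "\<dots> = (\<Sum>a<r. cis (real a * x)) * (\<Sum>b<r. cis (real b * y)) / of_nat (r * r)"
    by (subst sum_div_mod[of "\<lambda>a b. cis (real a * x) * cis (real b * y) / of_nat (r * r)"])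
      (simp add: sum_product sum_divide_distrib)
  also have "\<dots> = (if i div r = j div r \<and> i mod r = j mod r then 1 else 0)"
    using i j r by (simp add: x_def y_def sum_cis_cycle_angle_diff div_mod_less_square)
  also have "\<dots> = 1\<^sub>m (r * r) $$ (i, j)"
    using i j by (metis div_mult_mod_eq index_one_mat(1))
  finally show "(fourier_inv_mat r \<theta> \<phi> * fourier_mat r \<theta> \<phi>) $$ (i, j) = 1\<^sub>m (r * r) $$ (i, j)" .
qed (auto simp: fourier_inv_mat_def fourier_mat_def)

lemma DeltaGamma_carrier: "DeltaGamma r \<theta> \<phi> \<in> carrier_mat (r * r) (r * r)"
  by (simp add: DeltaGamma_def kron_def Delta_def)

lemma DeltaGamma_index:
  assumes "i < r * r" "l < r * r"
  shows "DeltaGamma r \<theta> \<phi> $$ (i, l) =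
     Delta r \<theta> $$ (i div r, l div r) * (if i mod r = l mod r then 1 else 0)
   + (if i div r = l div r then 1 else 0) * Delta r \<phi> $$ (i mod r, l mod r)"
  using assms by (simp add: DeltaGamma_def kron_def Delta_def div_mod_less_square)

lemma DeltaGamma_mult_fourier_mat:
  assumes r: "r \<ge> 2"
  shows "DeltaGamma r \<theta> \<phi> * fourier_mat r \<theta> \<phi> =
    fourier_mat r \<theta> \<phi> * mat_diag (r * r) (\<lambda>j. complex_of_real (grid_eigenvalue r \<theta> \<phi> j))"
    (is "?A * ?F = ?F * ?D")
proof (rule eq_matI)
  fix i j assume "i < dim_row (?F * ?D)" "j < dim_col (?F * ?D)"
  then have i: "i < r * r" and j: "j < r * r" by (auto simp: fourier_mat_def mat_diag_def)
  define x where "x = cycle_angle r \<theta> (j div r)"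
  define y where "y = cycle_angle r \<phi> (j mod r)"
  have "(?A * ?F) $$ (i, j) = (\<Sum>l<r * r. ?A $$ (i, l) * ?F $$ (l, j))"
    by (rule index_mult_mat_sum) (use i j DeltaGamma_carrier in \<open>auto simp: fourier_mat_def\<close>)
  also have "\<dots> = (\<Sum>l<r * r.
      (if l mod r = i mod r then Delta r \<theta> $$ (i div r, l div r) * cis (real (l div r) * x) * cis (real (l mod r) * y) else 0)
    + (if l div r = i div r then cis (real (l div r) * x) * (Delta r \<phi> $$ (i mod r, l mod r) * cis (real (l mod r) * y)) else 0))"
    using i j by (intro sum.cong refl) (auto simp: DeltaGamma_index fourier_mat_def x_def y_def algebra_simps)
  also have "\<dots> = (\<Sum>a<r. \<Sum>b<r.
      (if b = i mod r then Delta r \<theta> $$ (i div r, a) * cis (real a * x) * cis (real b * y) else 0)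
    + (if a = i div r then cis (real a * x) * (Delta r \<phi> $$ (i mod r, b) * cis (real b * y)) else 0))"
    by (rule sum_div_mod)
  also have "\<dots> = (\<Sum>a<r. Delta r \<theta> $$ (i div r, a) * cis (real a * x)) * cis (real (i mod r) * y)
      + cis (real (i div r) * x) * (\<Sum>b<r. Delta r \<phi> $$ (i mod r, b) * cis (real b * y))"
  proof -
    have pull: "(\<Sum>b<r. if P then g b else 0) = (if P then \<Sum>b<r. g b else 0)" for P and g :: "nat \<Rightarrow> complex"
      by (cases P) simp_all
    show ?thesis
      using i by (simp add: sum.distrib pull div_mod_less_square sum_distrib_left sum_distrib_right)
  qed
  also have "\<dots> = ?F $$ (i, j) * complex_of_real (grid_eigenvalue r \<theta> \<phi> j)"
    using i j r by (simp add: Delta_cis_eigenvector cis_real_mult_cycle_angle div_mod_less_square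
        fourier_mat_def grid_eigenvalue_def cycle_eigenvalue_def x_def y_def algebra_simps)
  also have "\<dots> = (?F * ?D) $$ (i, j)"
    using i j by (simp add: mat_diag_mult_right[of _ "r * r"] fourier_mat_def)
  finally show "(?A * ?F) $$ (i, j) = (?F * ?D) $$ (i, j)" .
qed (auto simp: fourier_mat_def mat_diag_def DeltaGamma_def kron_def Delta_def)

lemma eigs_sorted_eq_sort_diagonal:
  fixes A P Q :: "complex mat" and f :: "nat \<Rightarrow> real"
  assumes A: "A \<in> carrier_mat n n" and P: "P \<in> carrier_mat n n" and Q: "Q \<in> carrier_mat n n"
    and QP: "Q * P = 1\<^sub>m n"
    and AP: "A * P = P * mat_diag n (\<lambda>i. complex_of_real (f i))"
  shows "eigs_sorted A = sort (map f [0..<n])"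
proof -
  define D where "D = mat_diag n (\<lambda>i. complex_of_real (f i))"
  have D: "D \<in> carrier_mat n n" by (simp add: D_def)
  have PQ: "P * Q = 1\<^sub>m n" by (rule mat_mult_left_right_inverse[OF Q P QP])
  have "A = A * (P * Q)" using A by (simp add: PQ)
  also have "\<dots> = P * D * Q" using A P Q by (simp add: AP D_def flip: assoc_mult_mat)
  finally have "similar_mat A D"
    unfolding similar_mat_def similar_mat_wit_def using A P Q D PQ QP
    by (intro exI[of _ P] exI[of _ Q]) (auto simp: Let_def)
  then have char_poly: "char_poly A = (\<Prod>a\<leftarrow>diag_mat D. [:- a, 1:])"
    using char_poly_upper_triangular[OF D] by (simp add: char_poly_similar upper_triangular_def D_def mat_diag_def)
  have "0 \<notin> set (map (\<lambda>a. [:- a, 1:]) (diag_mat D))"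
    by auto
  from proots_prod_list[OF this] have "proots (char_poly A) = mset (diag_mat D)"
    by (simp add: char_poly o_def)
  moreover have "diag_mat D = map (\<lambda>i. complex_of_real (f i)) [0..<n]"
    by (simp add: diag_mat_def D_def mat_diag_def)
  ultimately show ?thesis
    by (simp add: eigs_sorted_def multiset.map_comp o_def flip: mset_map)
qed

lemma eigs_sorted_DeltaGamma:
  "r \<ge> 2 \<Longrightarrow> eigs_sorted (DeltaGamma r \<theta> \<phi>) = sort (map (grid_eigenvalue r \<theta> \<phi>) [0..<r * r])"
  by (rule eigs_sorted_eq_sort_diagonal[OF DeltaGamma_carrier _ _ fourier_inv_mat_mult DeltaGamma_mult_fourier_mat])
    (auto simp: fourier_mat_def fourier_inv_mat_def)

section \<open>Counting eigenvalues below a level\<close>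

lemma sorted_nth_less_iff:
  fixes xs :: "'a::linorder list"
  assumes xs: "sorted xs" and k: "k < length xs"
  shows "xs ! k < E \<longleftrightarrow> k < length (filter (\<lambda>x. x < E) xs)"
proof -
  let ?S = "{i. i < length xs \<and> xs ! i < E}"
  have len: "length (filter (\<lambda>x. x < E) xs) = card ?S"
    by (rule length_filter_conv_card)
  show ?thesis
  proof
    assume "xs ! k < E"
    then have "{..k} \<subseteq> ?S"
      using xs k by (auto intro: le_less_trans[OF sorted_nth_mono])
    then have "card {..k} \<le> card ?S" by (intro card_mono) auto
    then show "k < length (filter (\<lambda>x. x < E) xs)" by (simp add: len)
  next
    assume less: "k < length (filter (\<lambda>x. x < E) xs)"
    show "xs ! k < E"
    proof (rule ccontr)
      assume "\<not> xs ! k < E"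
      then have "?S \<subseteq> {..<k}"
        using xs by (auto simp: not_less intro: leI dest: sorted_nth_mono[of xs k])
      then have "card ?S \<le> k"
        using card_mono[of "{..<k}" ?S] by simp
      then show False using less by (simp add: len)
    qed
  qed
qed

definition count_below :: "nat \<Rightarrow> (nat \<Rightarrow> real) \<Rightarrow> real \<Rightarrow> nat" where
  "count_below n g E = card {i. i < n \<and> g i < E}"

lemma length_filter_sort_map_upt: "length (filter (\<lambda>x. x < E) (sort (map g [0..<n]))) = count_below n g E"
  by (simp add: filter_sort length_filter_conv_card count_below_def) (rule arg_cong[where f = card], auto)

lemma sort_map_nth_less_iff:
  assumes "k < n"
  shows "sort (map g [0..<n]) ! k < E \<longleftrightarrow> k < count_below n g E"
  using sorted_nth_less_iff[of "sort (map g [0..<n])" k E] assms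
  by (simp add: length_filter_sort_map_upt)

lemma count_below_le: "count_below n g E \<le> n"
  unfolding count_below_def by (rule card_mono[of "{..<n}", simplified]) auto

lemma lamG_less_iff:
  assumes "r \<ge> 2" "1 \<le> k" "k \<le> r * r"
  shows "lamG r k \<theta> \<phi> < ereal E \<longleftrightarrow> k \<le> count_below (r * r) (grid_eigenvalue r \<theta> \<phi>) E"
proof -
  have "lamG r k \<theta> \<phi> < ereal E \<longleftrightarrow> k - 1 < count_below (r * r) (grid_eigenvalue r \<theta> \<phi>) E"
    using assms sort_map_nth_less_iff[of "k - 1" "r * r" "grid_eigenvalue r \<theta> \<phi>" E]
    by (simp add: lamG_def eigs_sorted_DeltaGamma)
  then show ?thesis using assms by linarith
qed

lemma count_below_eq_maximal_index:
  assumes r: "r \<ge> 2" and k: "k \<le> r * r" and below: "k = 0 \<or> lamG r k \<theta> \<phi> < ereal E"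
    and maximal: "\<forall>j. k < j \<and> j \<le> r * r \<longrightarrow> \<not> lamG r j \<theta> \<phi> < ereal E"
  shows "count_below (r * r) (grid_eigenvalue r \<theta> \<phi>) E = k"
proof -
  let ?c = "count_below (r * r) (grid_eigenvalue r \<theta> \<phi>) E"
  have "k \<le> ?c"
    using below lamG_less_iff[OF r _ k] by (cases "k = 0") auto
  moreover have "\<not> k < ?c"
    using maximal lamG_less_iff[OF r, of ?c] count_below_le[of "r * r"] by fastforce
  ultimately show ?thesis by simp
qed

definition level_gap :: "nat \<Rightarrow> real \<Rightarrow> real \<Rightarrow> real \<Rightarrow> nat \<Rightarrow> bool" where
  "level_gap r E \<theta> \<phi> k \<longleftrightarrow> k < r * r \<and> count_below (r * r) (grid_eigenvalue r \<theta> \<phi>) E = k \<and>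
     (\<forall>i<r * r. grid_eigenvalue r \<theta> \<phi> i \<noteq> E)"

lemma lamG_level_gap:
  assumes r: "r \<ge> 2" and gap: "level_gap r E \<theta> \<phi> k"
  shows "lamG r k \<theta> \<phi> < ereal E" "ereal E < lamG r (k + 1) \<theta> \<phi>"
proof -
  have k: "k < r * r" and count: "count_below (r * r) (grid_eigenvalue r \<theta> \<phi>) E = k"
    and ne: "\<forall>i<r * r. grid_eigenvalue r \<theta> \<phi> i \<noteq> E"
    using gap by (auto simp: level_gap_def)
  show "lamG r k \<theta> \<phi> < ereal E"
    using lamG_less_iff[OF r, of k] k count by (cases "k = 0") (auto simp: lamG_def)
  have "eigs_sorted (DeltaGamma r \<theta> \<phi>) ! k \<in> grid_eigenvalue r \<theta> \<phi> ` {..<r * r}"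
    using k nth_mem[of k "eigs_sorted (DeltaGamma r \<theta> \<phi>)"] by (auto simp: eigs_sorted_DeltaGamma[OF r])
  then have "eigs_sorted (DeltaGamma r \<theta> \<phi>) ! k \<noteq> E" using ne by auto
  then show "ereal E < lamG r (k + 1) \<theta> \<phi>"
    using lamG_less_iff[OF r, of "k + 1" \<theta> \<phi> E] k count by (auto simp: lamG_def)
qed

section \<open>Perturbing along a line\<close>

lemma eventually_crossing_side_at_right:
  fixes f :: "real \<Rightarrow> real"
  assumes der: "(f has_real_derivative D) (at 0)" and transversal: "f 0 = E \<Longrightarrow> D \<noteq> 0"
  shows "eventually (\<lambda>t. f t \<noteq> E \<and> (f t < E \<longleftrightarrow> f 0 < E \<or> (f 0 = E \<and> D < 0))) (at_right 0)"
proof -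
  have lim: "(f \<longlongrightarrow> f 0) (at_right 0)"
    using DERIV_isCont[OF der] by (simp add: isCont_def filterlim_at_split)
  consider "f 0 < E" | "f 0 > E" | "f 0 = E" "D < 0" | "f 0 = E" "D > 0"
    using transversal by fastforce
  then show ?thesis
  proof cases
    case 1
    show ?thesis using order_tendstoD(2)[OF lim 1] by eventually_elim (use 1 in auto)
  next
    case 2
    show ?thesis using order_tendstoD(1)[OF lim 2] by eventually_elim (use 2 in auto)
  next
    case 3
    then obtain d where "d > 0" "\<forall>h>0. h < d \<longrightarrow> f (0 + h) < f 0"
      using DERIV_neg_dec_right[OF der] by blast
    with 3 show ?thesis
      unfolding eventually_at_right_field by (intro exI[of _ d]) auto
  next
    case 4
    then obtain d where "d > 0" "\<forall>h>0. h < d \<longrightarrow> f 0 < f (0 + h)"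
      using DERIV_pos_inc_right[OF der] by blast
    with 4 show ?thesis
      unfolding eventually_at_right_field by (intro exI[of _ d]) auto
  qed
qed

lemma count_below_crossing:
  assumes "\<And>i. i < n \<Longrightarrow> g' i < E \<longleftrightarrow> g i < E \<or> (g i = E \<and> P i)"
  shows "count_below n g' E = count_below n g E + card {i. i < n \<and> g i = E \<and> P i}"
proof -
  have "{i. i < n \<and> g' i < E} = {i. i < n \<and> g i < E} \<union> {i. i < n \<and> g i = E \<and> P i}"
    using assms by auto
  then show ?thesis
    unfolding count_below_def by (simp add: card_Un_disjoint disjoint_iff)
qed

lemma count_below_less: "i < n \<Longrightarrow> \<not> g i < E \<Longrightarrow> count_below n g E < n"
  unfolding count_below_def using psubset_card_mono[of "{..<n}" "{i. i < n \<and> g i < E}"] by auto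

definition grid_slope :: "nat \<Rightarrow> real \<Rightarrow> real \<Rightarrow> real \<Rightarrow> nat \<Rightarrow> real" where
  "grid_slope r x0 \<sigma> c i =
     - (2 * \<sigma> / real r) * (sin (cycle_angle r x0 (i div r)) + c * sin (cycle_angle r x0 (i mod r)))"

lemma grid_eigenvalue_line_has_derivative:
  assumes "r > 0"
  shows "((\<lambda>t. grid_eigenvalue r (x0 + \<sigma> * t) (x0 + \<sigma> * c * t) i) has_real_derivative grid_slope r x0 \<sigma> c i) (at 0)"
  using assms unfolding grid_eigenvalue_def cycle_eigenvalue_def cycle_angle_def grid_slope_def
  by (auto intro!: derivative_eq_intros simp: field_simps)

lemma exists_level_gap_on_line:
  assumes r: "r \<ge> 2" and "\<delta> > 0"
    and transversal: "\<And>i. i < r * r \<Longrightarrow> grid_eigenvalue r x0 x0 i = E \<Longrightarrow> grid_slope r x0 \<sigma> c i \<noteq> 0"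
    and even: "even (card {i. i < r * r \<and> grid_eigenvalue r x0 x0 i = E \<and> grid_slope r x0 \<sigma> c i < 0})"
    and top: "E < grid_eigenvalue r x0 x0 0"
  shows "\<exists>t n. 0 < t \<and> t < \<delta> \<and>
    level_gap r E (x0 + \<sigma> * t) (x0 + \<sigma> * c * t) (count_below (r * r) (grid_eigenvalue r x0 x0) E + 2 * n)"
proof -
  define g where "g t = grid_eigenvalue r (x0 + \<sigma> * t) (x0 + \<sigma> * c * t)" for t
  have g0: "g 0 = grid_eigenvalue r x0 x0" by (simp add: g_def)
  have "eventually (\<lambda>t. g t i \<noteq> E \<and>
      (g t i < E \<longleftrightarrow> g 0 i < E \<or> (g 0 i = E \<and> grid_slope r x0 \<sigma> c i < 0))) (at_right 0)"
    if "i < r * r" for i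
  proof (rule eventually_crossing_side_at_right[where f = "\<lambda>t. g t i"])
    show "((\<lambda>t. g t i) has_real_derivative grid_slope r x0 \<sigma> c i) (at 0)"
      using r grid_eigenvalue_line_has_derivative by (simp add: g_def)
    show "g 0 i = E \<Longrightarrow> grid_slope r x0 \<sigma> c i \<noteq> 0"
      using transversal that by (simp add: g0)
  qed
  then have "eventually (\<lambda>t. \<forall>i\<in>{..<r * r}. g t i \<noteq> E \<and>
      (g t i < E \<longleftrightarrow> g 0 i < E \<or> (g 0 i = E \<and> grid_slope r x0 \<sigma> c i < 0))) (at_right 0)"
    by (simp add: eventually_ball_finite_distrib)
  moreover have "eventually (\<lambda>t. 0 < t \<and> t < \<delta>) (at_right 0)"
    using eventually_at_right_less order_tendstoD(2)[OF tendsto_ident_at \<open>\<delta> > 0\<close>]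
    by (rule eventually_conj)
  ultimately have "eventually (\<lambda>t. (\<forall>i\<in>{..<r * r}. g t i \<noteq> E \<and>
      (g t i < E \<longleftrightarrow> g 0 i < E \<or> (g 0 i = E \<and> grid_slope r x0 \<sigma> c i < 0))) \<and> 0 < t \<and> t < \<delta>) (at_right 0)"
    by (rule eventually_conj)
  then obtain t where t: "0 < t" "t < \<delta>"
    and side: "\<forall>i<r * r. g t i \<noteq> E \<and> (g t i < E \<longleftrightarrow> g 0 i < E \<or> (g 0 i = E \<and> grid_slope r x0 \<sigma> c i < 0))"
    using eventually_happens'[OF trivial_limit_at_right_real] by blast
  obtain n where n: "card {i. i < r * r \<and> g 0 i = E \<and> grid_slope r x0 \<sigma> c i < 0} = 2 * n"
    using even g0 by (auto elim!: evenE)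
  have count: "count_below (r * r) (g t) E = count_below (r * r) (g 0) E + 2 * n"
    using count_below_crossing[of "r * r" "g t" E "g 0"] side n by simp
  have "count_below (r * r) (g t) E < r * r"
    using count_below_less[of 0 "r * r" "g t" E] side top r by (auto simp: g0)
  then show ?thesis
    using t side count by (intro exI[of _ t] exI[of _ n]) (auto simp: level_gap_def g_def)
qed

section \<open>Parity of the crossings\<close>

lemma even_card_involution:
  assumes "finite S" "\<And>x. x \<in> S \<Longrightarrow> f x \<in> S" "\<And>x. x \<in> S \<Longrightarrow> f (f x) = x" "\<And>x. x \<in> S \<Longrightarrow> f x \<noteq> x"
  shows "even (card S)"
  using assms
proof (induction "card S" arbitrary: S rule: less_induct)
  case less
  show ?case
  proof (cases "S = {}")
    case False
    then obtain x where x: "x \<in> S" by blast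
    define S' where "S' = S - {x, f x}"
    have fx: "f x \<in> S" "f x \<noteq> x" using x less.prems by auto
    have card: "card S = card S' + 2"
      using x fx less.prems(1) card_Diff_subset[of "{x, f x}" S] card_mono[of S "{x, f x}"]
      by (auto simp: S'_def)
    have "f y \<in> S'" if "y \<in> S'" for y
    proof -
      have "y \<in> S" "y \<noteq> x" "y \<noteq> f x" using that by (auto simp: S'_def)
      then show ?thesis
        using less.prems(2,3) x by (auto simp: S'_def) (metis less.prems(3))+
    qed
    then have "even (card S')"
      using less.prems card by (intro less.hyps) (auto simp: S'_def)
    then show ?thesis using card by simp
  qed simp
qed

lemma sin_pi_mult_sign:
  fixes y :: real
  assumes "0 \<le> y" "y < 2"
  shows "0 < sin (pi * y) \<longleftrightarrow> 0 < y \<and> y < 1" and "sin (pi * y) = 0 \<longleftrightarrow> y = 0 \<or> y = 1"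
proof -
  have pos: "0 < sin (pi * t)" if "0 < t" "t < 1" for t
    using that mult_strict_left_mono[of t 1 pi] by (intro sin_gt_zero) simp_all
  consider "y = 0" | "0 < y" "y < 1" | "y = 1" | "1 < y"
    using assms by linarith
  then have "(0 < sin (pi * y) \<longleftrightarrow> 0 < y \<and> y < 1) \<and> (sin (pi * y) = 0 \<longleftrightarrow> y = 0 \<or> y = 1)"
  proof cases
    case 2
    then show ?thesis using pos[of y] by simp
  next
    case 4
    have "sin (pi * y) = - sin (pi * (y - 1))"
      by (simp add: right_diff_distrib sin_diff)
    then have "sin (pi * y) < 0" using pos[of "y - 1"] 4 assms by simp
    then show ?thesis using 4 by auto
  qed simp_all
  then show "0 < sin (pi * y) \<longleftrightarrow> 0 < y \<and> y < 1" and "sin (pi * y) = 0 \<longleftrightarrow> y = 0 \<or> y = 1"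
    by auto
qed

lemma cycle_eigenvalue_reflect:
  assumes "r > 0" and "2 * \<theta> + 2 * pi * real (p + q) = 2 * pi * real r"
  shows "cycle_eigenvalue r \<theta> p = cycle_eigenvalue r \<theta> q"
proof -
  have "cycle_angle r \<theta> p = 2 * pi - cycle_angle r \<theta> q"
    using assms by (simp add: cycle_angle_def field_simps)
  then show ?thesis by (simp add: cycle_eigenvalue_def cos_diff)
qed

lemma even_card_level_pairs_at_zero:
  assumes h: "h > 0" and E: "E < 0"
  shows "even (card {(a, b). a < 2 * h \<and> b < 2 * h \<and>
    cycle_eigenvalue (2 * h) 0 a + cycle_eigenvalue (2 * h) 0 b = E \<and> (0 < a \<and> a < h \<or> a = h \<and> 0 < b \<and> b < h)})"
    (is "even (card ?C)")
proof -
  let ?ev = "cycle_eigenvalue (2 * h) 0"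
  define f where "f = (\<lambda>(a, b). if b = h then (h, a) else if a = h then (b, h) else (a, 2 * h - b))"
  have reflect: "?ev (2 * h - b) = ?ev b" if "b \<le> 2 * h" for b
    using that h by (intro cycle_eigenvalue_reflect) auto
  have ev_0: "?ev 0 = 2"
    by (simp add: cycle_eigenvalue_def cycle_angle_def)
  have ev_ge: "?ev b \<ge> -2" for b
    using cos_ge_minus_one[of "cycle_angle (2 * h) 0 b"] unfolding cycle_eigenvalue_def by linarith
  have nonzero: "b \<noteq> 0" if "?ev a + ?ev b = E" for a b
  proof
    assume "b = 0"
    then show False using that E ev_0 ev_ge[of a] by simp
  qed
  have "f p \<in> ?C \<and> f (f p) = p \<and> f p \<noteq> p" if mem: "p \<in> ?C" for p
  proof -
    obtain a b where p: "p = (a, b)" and ab: "a < 2 * h" "b < 2 * h" and ev: "?ev a + ?ev b = E"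
      and cond: "0 < a \<and> a < h \<or> a = h \<and> 0 < b \<and> b < h"
      using mem by (cases p) auto
    have "b \<noteq> 0" using nonzero ev .
    consider "b = h" | "b \<noteq> h" "a = h" | "b \<noteq> h" "a \<noteq> h" by blast
    then show ?thesis
    proof cases
      case 1
      then show ?thesis using ab ev cond by (auto simp: p f_def add.commute)
    next
      case 2
      then show ?thesis using ab ev cond by (auto simp: p f_def add.commute)
    next
      case 3
      then have "2 * h - b \<noteq> h" "2 * h - b \<noteq> b" "2 * h - b < 2 * h" using \<open>b \<noteq> 0\<close> ab by auto
      then show ?thesis using 3 ab ev cond reflect[of b] by (auto simp: p f_def)
    qed
  qed
  moreover have "finite ?C"
    by (rule finite_subset[of _ "{..<2 * h} \<times> {..<2 * h}"]) auto
  ultimately show ?thesis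
    by (intro even_card_involution[of ?C f]) auto
qed

lemma even_card_level_pairs_at_pi:
  assumes h: "h > 0"
  shows "even (card {(a, b). a < 2 * h \<and> b < 2 * h \<and>
    cycle_eigenvalue (2 * h) pi a + cycle_eigenvalue (2 * h) pi b = E \<and> h \<le> a})"
    (is "even (card ?C)")
proof -
  let ?ev = "cycle_eigenvalue (2 * h) pi"
  define f :: "nat \<times> nat \<Rightarrow> nat \<times> nat" where "f = (\<lambda>(a, b). (a, 2 * h - 1 - b))"
  have reflect: "?ev (2 * h - 1 - b) = ?ev b" if "b < 2 * h" for b
  proof (rule cycle_eigenvalue_reflect)
    have "real (2 * h - 1 - b + b) = 2 * real h - 1" using that by simp
    then show "2 * pi + 2 * pi * real (2 * h - 1 - b + b) = 2 * pi * real (2 * h)"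
      by (simp add: algebra_simps)
  qed (use h in simp)
  have "f p \<in> ?C \<and> f (f p) = p \<and> f p \<noteq> p" if mem: "p \<in> ?C" for p
  proof -
    obtain a b where p: "p = (a, b)" and ab: "a < 2 * h" "b < 2 * h" and ev: "?ev a + ?ev b = E" and "h \<le> a"
      using mem by (cases p) auto
    moreover have "2 * h - 1 - b \<noteq> b" "2 * h - 1 - (2 * h - 1 - b) = b" using ab by arith+
    ultimately show ?thesis using reflect[of b] by (auto simp: f_def)
  qed
  moreover have "finite ?C"
    by (rule finite_subset[of _ "{..<2 * h} \<times> {..<2 * h}"]) auto
  ultimately show ?thesis
    by (intro even_card_involution[of ?C f]) auto
qed

lemma sign_add_small_mult:
  fixes s s' c :: real
  assumes "s \<noteq> 0" "c < \<bar>s\<bar>" "0 < c" "\<bar>s'\<bar> \<le> 1"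
  shows "0 < s + c * s' \<longleftrightarrow> 0 < s" and "s + c * s' \<noteq> 0"
proof -
  have "\<bar>c * s'\<bar> \<le> c" using assms by (simp add: abs_mult mult_left_le)
  then show "0 < s + c * s' \<longleftrightarrow> 0 < s" and "s + c * s' \<noteq> 0" using assms by auto
qed

lemma sin_cycle_angle_zero_sign:
  assumes r: "r = 2 * h" "h > 0" and a: "a < r"
  shows "0 < sin (cycle_angle r 0 a) \<longleftrightarrow> 0 < a \<and> a < h"
    and "sin (cycle_angle r 0 a) = 0 \<longleftrightarrow> a = 0 \<or> a = h"
proof -
  have angle: "cycle_angle r 0 a = pi * (real a / real h)"
    using r by (simp add: cycle_angle_def)
  have "0 \<le> real a / real h" "real a / real h < 2"
    using r a by (simp_all add: divide_less_eq)
  note sign = sin_pi_mult_sign[OF this]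
  show "0 < sin (cycle_angle r 0 a) \<longleftrightarrow> 0 < a \<and> a < h"
    unfolding angle using sign(1) r by (simp add: divide_less_eq zero_less_divide_iff)
  show "sin (cycle_angle r 0 a) = 0 \<longleftrightarrow> a = 0 \<or> a = h"
    unfolding angle using sign(2) r by auto
qed

lemma sin_cycle_angle_pi_sign:
  assumes r: "r = 2 * h" "h > 0" and a: "a < r"
  shows "0 < sin (cycle_angle r pi a) \<longleftrightarrow> a < h" and "sin (cycle_angle r pi a) \<noteq> 0"
proof -
  have angle: "cycle_angle r pi a = pi * ((2 * real a + 1) / (2 * real h))"
    using r by (simp add: cycle_angle_def field_simps)
  have "0 \<le> (2 * real a + 1) / (2 * real h)" "(2 * real a + 1) / (2 * real h) < 2"
    using r a by (simp_all add: divide_less_eq)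
  note sign = sin_pi_mult_sign[OF this]
  have "real (2 * a + 1) \<noteq> real (2 * h)"
    by (simp only: of_nat_eq_iff) presburger
  moreover have "real (2 * a + 1) < real (2 * h) \<longleftrightarrow> a < h"
    by (simp only: of_nat_less_iff) presburger
  ultimately show "0 < sin (cycle_angle r pi a) \<longleftrightarrow> a < h" and "sin (cycle_angle r pi a) \<noteq> 0"
    unfolding angle using sign r by (simp_all add: divide_less_eq add.commute)
qed

lemma level_slope_sign_at_zero:
  assumes r: "r = 2 * h" "h > 0" and E: "E < 0" "E \<noteq> -4" "E \<noteq> 0" and c: "c > 0"
    and small: "\<forall>a<r. sin (cycle_angle r 0 a) \<noteq> 0 \<longrightarrow> c < \<bar>sin (cycle_angle r 0 a)\<bar>"
    and ab: "a < r" "b < r" and level: "cycle_eigenvalue r 0 a + cycle_eigenvalue r 0 b = E"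
  shows "sin (cycle_angle r 0 a) + c * sin (cycle_angle r 0 b) \<noteq> 0 \<and>
    (0 < sin (cycle_angle r 0 a) + c * sin (cycle_angle r 0 b) \<longleftrightarrow> 0 < a \<and> a < h \<or> a = h \<and> 0 < b \<and> b < h)"
proof (cases "sin (cycle_angle r 0 a) = 0")
  case False
  then have "a \<noteq> 0" "a \<noteq> h" using sin_cycle_angle_zero_sign(2)[OF r ab(1)] by auto
  then show ?thesis
    using sign_add_small_mult[OF False _ c abs_sin_le_one] small ab(1) False
      sin_cycle_angle_zero_sign(1)[OF r ab(1)] by auto
next
  case True
  then have a: "a = 0 \<or> a = h" using sin_cycle_angle_zero_sign(2)[OF r ab(1)] by auto
  have ev: "cycle_eigenvalue r 0 0 = 2" "cycle_eigenvalue r 0 h = -2"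
    using r by (simp_all add: cycle_eigenvalue_def cycle_angle_def)
  have "cycle_eigenvalue r 0 b \<ge> -2"
    using cos_ge_minus_one[of "cycle_angle r 0 b"] by (simp add: cycle_eigenvalue_def)
  have "a \<noteq> 0"
  proof
    assume "a = 0"
    then show False using level E ev \<open>cycle_eigenvalue r 0 b \<ge> -2\<close> by simp
  qed
  then have "a = h" using a by simp
  have "b \<noteq> 0"
  proof
    assume "b = 0"
    with level ev \<open>a = h\<close> have "E = 0" by simp
    with E show False by simp
  qed
  have "b \<noteq> h"
  proof
    assume "b = h"
    with level ev \<open>a = h\<close> have "E = -4" by simp
    with E show False by simp
  qed
  then have "sin (cycle_angle r 0 b) \<noteq> 0"
    using \<open>b \<noteq> 0\<close> sin_cycle_angle_zero_sign(2)[OF r ab(2)] by auto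
  then show ?thesis
    using True c \<open>a = h\<close> sin_cycle_angle_zero_sign(1)[OF r ab(2)] by (simp add: zero_less_mult_iff)
qed

lemma crossings_at_zero:
  assumes r: "r = 2 * h" "h > 0" and E: "E < 0" "E \<noteq> -4" "E \<noteq> 0" and c: "c > 0"
    and small: "\<forall>a<r. sin (cycle_angle r 0 a) \<noteq> 0 \<longrightarrow> c < \<bar>sin (cycle_angle r 0 a)\<bar>"
  shows "\<And>i. i < r * r \<Longrightarrow> grid_eigenvalue r 0 0 i = E \<Longrightarrow> grid_slope r 0 1 c i \<noteq> 0"
    and "even (card {i. i < r * r \<and> grid_eigenvalue r 0 0 i = E \<and> grid_slope r 0 1 c i < 0})"
proof -
  let ?s = "\<lambda>a. sin (cycle_angle r 0 a)" and ?ev = "cycle_eigenvalue r 0"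
  note sign = level_slope_sign_at_zero[OF r E c small]
  have slope: "grid_slope r 0 1 c i = - (2 / real r) * (?s (i div r) + c * ?s (i mod r))" for i
    by (simp add: grid_slope_def)
  have "2 / real r > 0" using r by simp
  then have slope_neg: "grid_slope r 0 1 c i < 0 \<longleftrightarrow> 0 < ?s (i div r) + c * ?s (i mod r)" for i
    unfolding slope by (simp only: mult_minus_left neg_less_0_iff_less zero_less_mult_iff) simp
  show "grid_slope r 0 1 c i \<noteq> 0" if i: "i < r * r" and level: "grid_eigenvalue r 0 0 i = E" for i
  proof -
    have "?s (i div r) + c * ?s (i mod r) \<noteq> 0"
      using sign[OF div_mod_less_square[OF i] level[unfolded grid_eigenvalue_def]] by blast
    then show ?thesis using \<open>2 / real r > 0\<close> by (simp add: slope)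
  qed
  have "card {i. i < r * r \<and> grid_eigenvalue r 0 0 i = E \<and> grid_slope r 0 1 c i < 0} =
      card {(a, b). a < r \<and> b < r \<and> ?ev a + ?ev b = E \<and> 0 < ?s a + c * ?s b}"
    using card_div_mod[of r r "\<lambda>a b. ?ev a + ?ev b = E \<and> 0 < ?s a + c * ?s b"]
    by (simp add: grid_eigenvalue_def slope_neg)
  also have "\<dots> = card {(a, b). a < r \<and> b < r \<and> ?ev a + ?ev b = E \<and> (0 < a \<and> a < h \<or> a = h \<and> 0 < b \<and> b < h)}"
  proof -
    have "(a < r \<and> b < r \<and> ?ev a + ?ev b = E \<and> 0 < ?s a + c * ?s b) \<longleftrightarrow>
        (a < r \<and> b < r \<and> ?ev a + ?ev b = E \<and> (0 < a \<and> a < h \<or> a = h \<and> 0 < b \<and> b < h))" for a b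
    proof (cases "a < r \<and> b < r \<and> ?ev a + ?ev b = E")
      case True
      then show ?thesis using sign[of a b] by simp
    qed auto
    then show ?thesis by (simp only:)
  qed
  finally show "even (card {i. i < r * r \<and> grid_eigenvalue r 0 0 i = E \<and> grid_slope r 0 1 c i < 0})"
    using even_card_level_pairs_at_zero[OF r(2) E(1)] r(1) by simp
qed

lemma crossings_at_pi:
  assumes r: "r = 2 * h" "h > 0" and c: "c > 0" and small: "\<forall>a<r. c < \<bar>sin (cycle_angle r pi a)\<bar>"
  shows "\<And>i. i < r * r \<Longrightarrow> grid_slope r pi (-1) c i \<noteq> 0"
    and "even (card {i. i < r * r \<and> grid_eigenvalue r pi pi i = E \<and> grid_slope r pi (-1) c i < 0})"
proof -
  let ?s = "\<lambda>a. sin (cycle_angle r pi a)" and ?ev = "cycle_eigenvalue r pi"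
  have sign: "?s a + c * ?s b \<noteq> 0 \<and> (?s a + c * ?s b < 0 \<longleftrightarrow> h \<le> a)" if a: "a < r" for a b
  proof -
    have "c < \<bar>?s a\<bar>" using small a by blast
    from sign_add_small_mult[OF sin_cycle_angle_pi_sign(2)[OF r a] this c abs_sin_le_one[of "cycle_angle r pi b"]]
    show ?thesis using sin_cycle_angle_pi_sign(1)[OF r a] by auto
  qed
  have slope: "grid_slope r pi (-1) c i = (2 / real r) * (?s (i div r) + c * ?s (i mod r))" for i
    by (simp add: grid_slope_def)
  have "2 / real r > 0" using r by simp
  then have slope_neg: "grid_slope r pi (-1) c i < 0 \<longleftrightarrow> ?s (i div r) + c * ?s (i mod r) < 0" for i
    unfolding slope by (simp only: mult_less_0_iff) auto
  show "grid_slope r pi (-1) c i \<noteq> 0" if i: "i < r * r" for i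
  proof -
    have "?s (i div r) + c * ?s (i mod r) \<noteq> 0"
      using sign[OF div_mod_less_square(1)[OF i]] by blast
    then show ?thesis using \<open>2 / real r > 0\<close> by (simp add: slope)
  qed
  have "card {i. i < r * r \<and> grid_eigenvalue r pi pi i = E \<and> grid_slope r pi (-1) c i < 0} =
      card {(a, b). a < r \<and> b < r \<and> ?ev a + ?ev b = E \<and> ?s a + c * ?s b < 0}"
    using card_div_mod[of r r "\<lambda>a b. ?ev a + ?ev b = E \<and> ?s a + c * ?s b < 0"]
    by (simp add: grid_eigenvalue_def slope_neg)
  also have "\<dots> = card {(a, b). a < r \<and> b < r \<and> ?ev a + ?ev b = E \<and> h \<le> a}"
  proof -
    have "(a < r \<and> b < r \<and> ?ev a + ?ev b = E \<and> ?s a + c * ?s b < 0) \<longleftrightarrow>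
        (a < r \<and> b < r \<and> ?ev a + ?ev b = E \<and> h \<le> a)" for a b
    proof (cases "a < r")
      case True
      then show ?thesis using sign[of a b] by simp
    qed auto
    then show ?thesis by (simp only:)
  qed
  finally show "even (card {i. i < r * r \<and> grid_eigenvalue r pi pi i = E \<and> grid_slope r pi (-1) c i < 0})"
    using even_card_level_pairs_at_pi[OF r(2)] r(1) by simp
qed

lemma exists_pos_less_nonzero_abs:
  fixes f :: "nat \<Rightarrow> real"
  shows "\<exists>c>0. c < 1 \<and> (\<forall>a<n. f a \<noteq> 0 \<longrightarrow> c < \<bar>f a\<bar>)"
proof -
  define m where "m = Min (insert 1 ((\<lambda>a. \<bar>f a\<bar>) ` {a. a < n \<and> f a \<noteq> 0}))"
  have "0 < m" by (simp add: m_def)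
  moreover have "m \<le> 1" "\<forall>a<n. f a \<noteq> 0 \<longrightarrow> m \<le> \<bar>f a\<bar>" by (simp_all add: m_def)
  ultimately show ?thesis by (intro exI[of _ "m / 2"]) auto
qed

lemma exists_level_gap_near_zero:
  assumes r: "r = 2 * h" "h > 0" and E: "E < 0" "E \<noteq> -4" "E \<noteq> 0"
  shows "\<exists>\<theta> \<phi> n. \<theta> \<in> {0..pi} \<and> \<phi> \<in> {0..pi} \<and>
    level_gap r E \<theta> \<phi> (count_below (r * r) (grid_eigenvalue r 0 0) E + 2 * n)"
proof -
  obtain c where c: "0 < c" "c < 1"
    and small: "\<forall>a<r. sin (cycle_angle r 0 a) \<noteq> 0 \<longrightarrow> c < \<bar>sin (cycle_angle r 0 a)\<bar>"
    using exists_pos_less_nonzero_abs[of r "\<lambda>a. sin (cycle_angle r 0 a)"] by blast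
  have r2: "r \<ge> 2" using r by simp
  have top: "E < grid_eigenvalue r 0 0 0"
    using E by (simp add: grid_eigenvalue_def cycle_eigenvalue_def cycle_angle_def)
  obtain t n where t: "0 < t" "t < pi / 2"
    and gap: "level_gap r E (0 + 1 * t) (0 + 1 * c * t) (count_below (r * r) (grid_eigenvalue r 0 0) E + 2 * n)"
    using exists_level_gap_on_line[OF r2 pi_half_gt_zero crossings_at_zero[OF r E c(1) small] top] by blast
  have "0 \<le> c * t" "c * t \<le> t" using c t by (simp_all add: mult_left_le_one_le)
  then have "t \<in> {0..pi}" "c * t \<in> {0..pi}" using t unfolding atLeastAtMost_iff by linarith+
  with gap[simplified] show ?thesis by blast
qed

lemma exists_level_gap_near_pi:
  assumes r: "r = 2 * h" "h > 0" and E: "E < 0"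
  shows "\<exists>\<theta> \<phi> n. \<theta> \<in> {0..pi} \<and> \<phi> \<in> {0..pi} \<and>
    level_gap r E \<theta> \<phi> (count_below (r * r) (grid_eigenvalue r pi pi) E + 2 * n)"
proof -
  obtain c where c: "0 < c" "c < 1"
    and small: "\<forall>a<r. sin (cycle_angle r pi a) \<noteq> 0 \<longrightarrow> c < \<bar>sin (cycle_angle r pi a)\<bar>"
    using exists_pos_less_nonzero_abs[of r "\<lambda>a. sin (cycle_angle r pi a)"] by blast
  have small': "\<forall>a<r. c < \<bar>sin (cycle_angle r pi a)\<bar>"
    using small sin_cycle_angle_pi_sign(2)[OF r] by blast
  have r2: "r \<ge> 2" using r by simp
  have "0 \<le> pi / real r" "pi / real r \<le> pi / 2"
    using r2 by (simp, intro divide_left_mono) auto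
  then have "0 \<le> cos (pi / real r)" by (intro cos_ge_zero) linarith+
  then have top: "E < grid_eigenvalue r pi pi 0"
    using E by (simp add: grid_eigenvalue_def cycle_eigenvalue_def cycle_angle_def)
  obtain t n where t: "0 < t" "t < pi / 2"
    and gap: "level_gap r E (pi + -1 * t) (pi + -1 * c * t) (count_below (r * r) (grid_eigenvalue r pi pi) E + 2 * n)"
    using exists_level_gap_on_line[OF r2 pi_half_gt_zero crossings_at_pi[OF r c(1) small'] top] by blast
  have "0 \<le> c * t" "c * t \<le> t" using c t by (simp_all add: mult_left_le_one_le)
  then have "pi - t \<in> {0..pi}" "pi - c * t \<in> {0..pi}" using t unfolding atLeastAtMost_iff by linarith+
  with gap[simplified] show ?thesis by blast
qed

theorem mainTheorem8:
  fixes r l m :: nat and E :: real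
  assumes "r > 0" and "even r"
    and "E \<in> C_Gamma r" and "E \<notin> {-4, 0, 4}" and "E < 0"
    and "l \<ge> 1" and "l \<le> r^2" and "lamG r l 0 0 < ereal E"
    and "\<forall>k. l < k \<and> k \<le> r^2 \<longrightarrow> \<not> lamG r k 0 0 < ereal E"
    and "m \<le> r^2" and "lamG r m pi pi < ereal E"
    and "\<forall>k. m < k \<and> k \<le> r^2 \<longrightarrow> \<not> lamG r k pi pi < ereal E"
  shows "\<exists>\<theta>1 \<phi>1 \<theta>2 \<phi>2 :: real. \<exists>n1 n2 :: nat.
     \<theta>1 \<in> {0..pi} \<and> \<phi>1 \<in> {0..pi} \<and> \<theta>2 \<in> {0..pi} \<and> \<phi>2 \<in> {0..pi} \<and>
     l + 2*n1 + 1 \<le> r^2 \<and> m + 2*n2 + 1 \<le> r^2 \<and>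
     lamG r (l + 2*n1) \<theta>1 \<phi>1 < ereal E \<and> ereal E < lamG r (l + 2*n1 + 1) \<theta>1 \<phi>1 \<and>
     lamG r (m + 2*n2) \<theta>2 \<phi>2 < ereal E \<and> ereal E < lamG r (m + 2*n2 + 1) \<theta>2 \<phi>2"
proof -
  obtain h where r: "r = 2 * h" and h: "h > 0" using \<open>even r\<close> \<open>r > 0\<close> by auto
  then have r2: "r \<ge> 2" by simp
  have sq: "r^2 = r * r" by (simp add: power2_eq_square)
  have "count_below (r * r) (grid_eigenvalue r 0 0) E = l"
    by (intro count_below_eq_maximal_index[OF r2]) (use assms(7-9) in \<open>simp_all add: sq\<close>)
  then obtain \<theta>1 \<phi>1 n1 where "\<theta>1 \<in> {0..pi}" "\<phi>1 \<in> {0..pi}" and gap1: "level_gap r E \<theta>1 \<phi>1 (l + 2 * n1)"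
    using exists_level_gap_near_zero[OF r h \<open>E < 0\<close>] assms(4) by auto
  have "count_below (r * r) (grid_eigenvalue r pi pi) E = m"
    by (intro count_below_eq_maximal_index[OF r2]) (use assms(10-12) in \<open>simp_all add: sq\<close>)
  then obtain \<theta>2 \<phi>2 n2 where "\<theta>2 \<in> {0..pi}" "\<phi>2 \<in> {0..pi}" and gap2: "level_gap r E \<theta>2 \<phi>2 (m + 2 * n2)"
    using exists_level_gap_near_pi[OF r h \<open>E < 0\<close>] by auto
  moreover have "l + 2 * n1 + 1 \<le> r^2" "m + 2 * n2 + 1 \<le> r^2"
    using gap1 gap2 by (auto simp: level_gap_def sq)
  ultimately show ?thesis
    using lamG_level_gap[OF r2 gap1] lamG_level_gap[OF r2 gap2] \<open>\<theta>1 \<in> {0..pi}\<close> \<open>\<phi>1 \<in> {0..pi}\<close> by blast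
qed

end
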